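(* Let $p$ be a prime and define $a\in{\mathbb F}_p(x,y,z)^{{\mathbb N}}$ by $$a(n)=(x+y+z)^n-(x+y)^n-(x+z)^n-(y+z)^n+x^n+y^n+z^n.$$ Then ${\mathcal Z}(a)=\{p^n\mid n\in{\mathbb N}\}\cup\{p^n+p^m\mid n,m\in{\mathbb N}\}$.
   Context: ${\mathbb N}=\{0,1,2,\dots\}$, ${\mathbb F}_p(x,y,z)$ is the rational function field in three variables over the field with $p$ elements, and ${\mathcal Z}(a)=\{n\in{\mathbb N}\mid a(n)=0\}$. *)

theory Defs
  imports "Berlekamp_Zassenhaus.Finite_Field" "HOL-Computational_Algebra.Fraction_Field"
begin

text \<open>The rational function field F_p(x,y,z) is realised as the fraction field of
  the polynomial ring F_p[x][y][z] (nested univariate polynomials), where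
  F_p = 'p mod_ring with CARD('p) = p prime.\<close>

type_synonym 'p ratfun3 = "'p mod_ring poly poly poly fract"

definition varX :: "'p::prime_card ratfun3" where
  "varX = Fract [:[:[:0, 1:]:]:] 1"

definition varY :: "'p::prime_card ratfun3" where
  "varY = Fract [:[:0, 1:]:] 1"

definition varZ :: "'p::prime_card ratfun3" where
  "varZ = Fract [:0, 1:] 1"

definition seq_a :: "nat \<Rightarrow> 'p::prime_card ratfun3" where
  "seq_a n = (varX + varY + varZ) ^ n - (varX + varY) ^ n - (varX + varZ) ^ n
             - (varY + varZ) ^ n + varX ^ n + varY ^ n + varZ ^ n"

definition zero_set :: "(nat \<Rightarrow> 'b::zero) \<Rightarrow> nat set" where
  "zero_set a = {n. a n = 0}"

end

theory Submission
  imports Defs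
begin

text \<open>Regard a(n) as a polynomial in z over F_p[x,y]. By the Freshman's dream it vanishes
  when n = p^e or n = p^e + p^f. Otherwise let p^e be the largest power of p below n. The
  coefficient of z^(p^e) in a(n) is (n choose p^e) ((x+y)^m - x^m - y^m) with m = n - p^e, and
  (n choose p^e) is congruent mod p to the leading base-p digit of n, hence nonzero. Since m is
  not a power of p, the same argument applied to the coefficient of y^(p^f), with p^f the largest
  power of p below m, shows that (x+y)^m - x^m - y^m does not vanish either.\<close>

definition power_defect2 :: "'a::comm_ring_1 \<Rightarrow> 'a \<Rightarrow> nat \<Rightarrow> 'a" where
  "power_defect2 x y n = (x + y) ^ n - x ^ n - y ^ n"

definition power_defect3 :: "'a::comm_ring_1 \<Rightarrow> 'a \<Rightarrow> 'a \<Rightarrow> nat \<Rightarrow> 'a" where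
  "power_defect3 x y z n = (x + y + z) ^ n - (x + y) ^ n - (x + z) ^ n - (y + z) ^ n
                           + x ^ n + y ^ n + z ^ n"

lemma power_one_plus_eq:
  fixes x :: "'a::comm_semiring_1"
  obtains c where "(1 + x) ^ q = 1 + of_nat q * x + x\<^sup>2 * c"
proof (induction q arbitrary: thesis)
  case 0
  show ?case by (rule "0.prems"[of 0]) simp
next
  case (Suc q)
  then obtain c where "(1 + x) ^ q = 1 + of_nat q * x + x\<^sup>2 * c" by blast
  then have "(1 + x) ^ Suc q = 1 + of_nat (Suc q) * x + x\<^sup>2 * (of_nat q + c + x * c)"
    by (simp add: algebra_simps power2_eq_square)
  then show ?case by (rule Suc.prems)
qed

text \<open>A weak form of Lucas' theorem, obtained by comparing the coefficients of X^N in
  (1+X)^n = (1+X^N)^q (1+X)^r for n = q N + r and N a power of the characteristic.\<close>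

lemma of_nat_choose_CHAR_power:
  assumes "prime CHAR('a::comm_ring_1)" and "CHAR('a) ^ e \<le> n"
  shows "(of_nat (n choose CHAR('a) ^ e) :: 'a) = of_nat (n div CHAR('a) ^ e)"
proof -
  define N where "N = CHAR('a) ^ e"
  define q where "q = n div N"
  define r where "r = n mod N"
  have "N > 0" unfolding N_def using assms(1) by (simp add: prime_gt_0_nat)
  then have "r < N" unfolding r_def by simp
  define P :: "'a poly" where "P = 1 + monom 1 1"
  have P_linear: "P = [:1, 1:]"
    by (simp add: P_def monom_Suc one_pCons)
  have "P ^ N = 1 ^ N + monom 1 1 ^ N"
    unfolding P_def by (rule freshmans_dream') (simp_all add: assms(1) N_def)
  then have P_N: "P ^ N = 1 + monom 1 N"
    by (simp only: power_one monom_power mult_1)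
  obtain C where C: "(1 + monom (1::'a) N) ^ q = 1 + of_nat q * monom 1 N + (monom 1 N)\<^sup>2 * C"
    by (rule power_one_plus_eq)
  have "P ^ n = (P ^ N) ^ q * P ^ r"
    unfolding q_def r_def by (metis div_mult_mod_eq mult.commute power_add power_mult)
  also have "\<dots> = P ^ r + monom 1 N * (of_nat q * P ^ r + monom 1 N * (C * P ^ r))"
    unfolding P_N C by (simp add: algebra_simps power2_eq_square)
  finally have "coeff (P ^ n) N = coeff (P ^ r) N + of_nat q * coeff (P ^ r) 0"
    using \<open>N > 0\<close> by (simp add: coeff_monom_mult of_nat_poly)
  also have "\<dots> = of_nat q"
    using \<open>r < N\<close> by (simp add: P_linear coeff_linear_poly_power coeff_eq_0 degree_linear_power)
  finally show ?thesis
    using assms(2) by (simp add: P_linear coeff_linear_poly_power N_def q_def)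
qed

lemma of_nat_choose_CHAR_power_neq_0:
  assumes "prime CHAR('a::comm_ring_1)" and "CHAR('a) ^ e \<le> n" and "n < CHAR('a) ^ Suc e"
  shows "(of_nat (n choose CHAR('a) ^ e) :: 'a) \<noteq> 0"
proof -
  let ?d = "n div CHAR('a) ^ e"
  have "CHAR('a) ^ e > 0" using assms(1) by (simp add: prime_gt_0_nat)
  then have "0 < ?d" and "?d < CHAR('a)"
    using assms(2,3) by (simp_all add: div_greater_zero_iff div_less_iff_less_mult mult.commute)
  then have "\<not> CHAR('a) dvd ?d" by (auto dest: dvd_imp_le)
  then show ?thesis
    using of_nat_choose_CHAR_power[OF assms(1,2)] by (simp add: of_nat_eq_0_iff_char_dvd)
qed

lemma largest_power_below:
  fixes p n :: nat
  assumes "prime p" and "0 < n" and "n \<notin> range ((^) p)"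
  obtains e where "p ^ e < n" and "n < p ^ Suc e"
proof -
  obtain e where "p ^ e \<le> n" "n < p ^ (e + 1)"
    using ex_power_ivl1[of p n] assms(1,2) prime_ge_2_nat by auto
  moreover have "p ^ e \<noteq> n" using assms(3) by auto
  ultimately have "p ^ e < n" and "n < p ^ Suc e" by simp_all
  then show thesis by (rule that)
qed

lemma coeff_power_defect2:
  fixes x :: "'a::comm_ring_1"
  assumes "0 < i" and "i < m"
  shows "coeff (power_defect2 [:x:] [:0, 1:] m) i = of_nat (m choose i) * x ^ (m - i)"
  using assms
  by (simp add: power_defect2_def coeff_linear_poly_power poly_const_pow power_0_left coeff_pCons
      split: nat.split)

lemma coeff_power_defect3:
  fixes x y :: "'a::comm_ring_1"
  assumes "0 < k" and "k < n"
  shows "coeff (power_defect3 [:x:] [:y:] [:0, 1:] n) k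
           = of_nat (n choose k) * power_defect2 x y (n - k)"
  using assms
  by (simp add: power_defect3_def power_defect2_def coeff_linear_poly_power poly_const_pow
      power_0_left coeff_pCons algebra_simps split: nat.split)

lemma power_defect3_CHAR_power:
  fixes x y z :: "'a::comm_ring_1"
  assumes "prime CHAR('a)"
  shows "power_defect3 x y z (CHAR('a) ^ e) = 0"
  by (simp add: power_defect3_def freshmans_dream'[OF assms refl])

lemma power_defect3_CHAR_power_add:
  fixes x y z :: "'a::comm_ring_1"
  assumes "prime CHAR('a)"
  shows "power_defect3 x y z (CHAR('a) ^ e + CHAR('a) ^ f) = 0"
  by (simp add: power_defect3_def power_add freshmans_dream'[OF assms refl] algebra_simps)

lemma power_defect2_neq_0:
  fixes c :: "'a::idom"
  assumes "prime CHAR('a)" and "c \<noteq> 0" and "0 < m" and "m \<notin> range ((^) CHAR('a))"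
  shows "power_defect2 [:c:] [:0, 1:] m \<noteq> 0"
proof -
  obtain f where f: "CHAR('a) ^ f < m" "m < CHAR('a) ^ Suc f"
    using largest_power_below assms(1,3,4) by blast
  have "coeff (power_defect2 [:c:] [:0, 1:] m) (CHAR('a) ^ f)
          = of_nat (m choose CHAR('a) ^ f) * c ^ (m - CHAR('a) ^ f)"
    using f(1) assms(1) by (simp add: coeff_power_defect2 prime_gt_0_nat)
  also have "\<dots> \<noteq> 0"
    using of_nat_choose_CHAR_power_neq_0[OF assms(1) less_imp_le[OF f(1)] f(2)] assms(2) by simp
  finally show ?thesis by auto
qed

lemma power_defect3_neq_0:
  fixes c :: "'a::idom"
  assumes "prime CHAR('a)" and "c \<noteq> 0"
    and "n \<notin> {CHAR('a) ^ e | e. True} \<union> {CHAR('a) ^ e + CHAR('a) ^ f | e f. True}"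
  shows "power_defect3 [:[:c:]:] [:[:0, 1:]:] [:0, 1:] n \<noteq> 0"
proof (cases "n = 0")
  case True
  then show ?thesis by (simp add: power_defect3_def)
next
  case False
  let ?p = "CHAR('a)"
  have "n \<notin> range ((^) ?p)" using assms(3) by blast
  then obtain e where e: "?p ^ e < n" "n < ?p ^ Suc e"
    using largest_power_below assms(1) False by blast
  define m where "m = n - ?p ^ e"
  have "m \<notin> range ((^) ?p)"
  proof
    assume "m \<in> range ((^) ?p)"
    then obtain f where "m = ?p ^ f" by blast
    then have "n = ?p ^ e + ?p ^ f" using e(1) by (simp add: m_def)
    then show False using assms(3) by blast
  qed
  moreover have "0 < m" using e(1) by (simp add: m_def)
  ultimately have defect2: "power_defect2 [:c:] [:0, 1:] (n - ?p ^ e) \<noteq> 0"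
    using power_defect2_neq_0[of c m] assms(1,2) by (simp add: m_def)
  have "coeff (power_defect3 [:[:c:]:] [:[:0, 1:]:] [:0, 1:] n) (?p ^ e)
          = of_nat (n choose ?p ^ e) * power_defect2 [:c:] [:0, 1:] (n - ?p ^ e)"
    using e(1) assms(1) by (simp add: coeff_power_defect3 prime_gt_0_nat)
  also have "\<dots> \<noteq> 0"
    using of_nat_choose_CHAR_power_neq_0[where 'a = "'a poly", OF _ less_imp_le]
      e assms(1) defect2 by simp
  finally show ?thesis by auto
qed

text \<open>The outer polynomial variable plays z, the middle one y, and x may be any nonzero
  constant c.\<close>

lemma power_defect3_eq_0_iff:
  fixes c :: "'a::idom"
  assumes "prime CHAR('a)" and "c \<noteq> 0"
  shows "power_defect3 [:[:c:]:] [:[:0, 1:]:] [:0, 1:] n = 0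
           \<longleftrightarrow> n \<in> {CHAR('a) ^ e | e. True} \<union> {CHAR('a) ^ e + CHAR('a) ^ f | e f. True}"
proof
  have "prime CHAR('a poly poly)" using assms(1) by simp
  note vanishing = power_defect3_CHAR_power[OF this] power_defect3_CHAR_power_add[OF this]
  show "n \<in> {CHAR('a) ^ e | e. True} \<union> {CHAR('a) ^ e + CHAR('a) ^ f | e f. True}
          \<Longrightarrow> power_defect3 [:[:c:]:] [:[:0, 1:]:] [:0, 1:] n = 0"
    using vanishing by auto
qed (use power_defect3_neq_0[OF assms] in blast)

lemma Fract_power: "Fract (a::'a::idom) 1 ^ n = Fract (a ^ n) 1"
  by (induction n) (simp_all add: One_fract_def)

lemma power_defect3_Fract:
  "power_defect3 (Fract a 1) (Fract b 1) (Fract c 1) n = Fract (power_defect3 a b c n) 1"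
  by (simp add: power_defect3_def Fract_power)

theorem proposition3p2:
  fixes p :: nat
  assumes "p = CARD('p::prime_card)"
  shows "zero_set (seq_a :: nat \<Rightarrow> 'p ratfun3)
           = {p ^ n | n. True} \<union> {p ^ n + p ^ m | n m. True}"
proof -
  let ?t = "[:0, 1:] :: 'p mod_ring poly"
  have "(seq_a n :: 'p ratfun3) = power_defect3 varX varY varZ n" for n
    by (simp only: seq_a_def power_defect3_def)
  also have "\<dots> n = Fract (power_defect3 [:[:?t:]:] [:[:0, 1:]:] [:0, 1:] n) 1" for n
    unfolding varX_def varY_def varZ_def power_defect3_Fract ..
  finally have "(seq_a n :: 'p ratfun3) = 0
                  \<longleftrightarrow> power_defect3 [:[:?t:]:] [:[:0, 1:]:] [:0, 1:] n = 0" for n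
    by (simp add: Zero_fract_def eq_fract)
  moreover have "prime CHAR('p mod_ring poly)" and "CHAR('p mod_ring poly) = p"
    using assms prime_card by simp_all
  ultimately have "(seq_a n :: 'p ratfun3) = 0
                     \<longleftrightarrow> n \<in> {p ^ e | e. True} \<union> {p ^ e + p ^ f | e f. True}" for n
    using power_defect3_eq_0_iff[of ?t n] by simp
  then show ?thesis unfolding zero_set_def by blast
qed

end
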